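(* Let $\mathrm{Aut}(K_{C^3(m)^*})$ be the group of permutations of $\{1,\ldots,m\}$ preserving the simplicial complex $K_{C^3(m)^*}$. If $m>5$, this group is generated by $\sigma\colon i\mapsto m+1-i$ and the transposition $\tau=(1\ m)$. If $m=5$, it is generated by the permutation $1\mapsto3,\,2\mapsto4,\,3\mapsto5,\,4\mapsto2,\,5\mapsto1$ and the transposition $(1\ 5)$.
   Context: For a simple polytope $P$ with facets $F_1,\ldots,F_m$, $K_P$ is the simplicial complex on $\{1,\ldots,m\}$ with $\{i_1,\ldots,i_k\}\in K_P$ iff $F_{i_1}\cap\cdots\cap F_{i_k}\neq\emptyset$. $C^3(m)^*$ is the dual of the cyclic $3$-polytope with $m$ vertices, with facets labeled so that the maximal faces of $K_{C^3(m)^*}$ are exactly $\{1,i,i+1\}$ for $i=2,\ldots,m-1$ and $\{i,i+1,m\}$ for $i=1,\ldots,m-2$. *)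

theory Defs
  imports "HOL-Algebra.Sym_Groups" "HOL-Algebra.Generated_Groups"
begin

text \<open>Maximal faces of the simplicial complex K of the dual cyclic 3-polytope with m facets.\<close>
definition cyc_maxfaces :: "nat \<Rightarrow> nat set set" where
  "cyc_maxfaces m = {{1, i, i + 1} | i. 2 \<le> i \<and> i \<le> m - 1}
                  \<union> {{i, i + 1, m} | i. 1 \<le> i \<and> i \<le> m - 2}"

definition K_cyc :: "nat \<Rightarrow> nat set set" where
  "K_cyc m = {F. \<exists>M \<in> cyc_maxfaces m. F \<subseteq> M}"

definition Aut_K :: "nat \<Rightarrow> (nat \<Rightarrow> nat) set" where
  "Aut_K m = {p. p permutes {1..m} \<and> (\<forall>F. F \<in> K_cyc m \<longleftrightarrow> p ` F \<in> K_cyc m)}"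

definition sigma_rev :: "nat \<Rightarrow> nat \<Rightarrow> nat" where
  "sigma_rev m = (\<lambda>i. if i \<in> {1..m} then m + 1 - i else i)"

definition tau_1m :: "nat \<Rightarrow> nat \<Rightarrow> nat" where
  "tau_1m m = transpose 1 m"

definition rho5 :: "nat \<Rightarrow> nat" where
  "rho5 = (\<lambda>i. if i = 1 then 3 else if i = 2 then 4 else if i = 3 then 5
              else if i = 4 then 2 else if i = 5 then 1 else i)"

end

theory Submission
  imports Defs
begin

text \<open>
  The edges of the complex are those of the path 1, 2, ..., m together with all edges at 1 and
  at m. For m > 5 the vertices 1 and m are the only ones adjacent to all others, so an
  automorphism preserves {1, m} and hence restricts to an automorphism of the path 2, ..., m - 1,
  which is the identity or the reversal. This leaves exactly id, \<tau>, \<sigma> and \<tau> \<circ> \<sigma>.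
  For m = 5 the only non-edge is {2, 4}: the complex is the join of {2, 4} with the boundary of
  the triangle {1, 3, 5}, so its automorphisms are the twelve permutations preserving {2, 4},
  and each of them is checked to be a word in \<rho> and \<tau>.
\<close>

lemma generate_sym_group_comp:
  "p \<in> generate (sym_group n) S \<Longrightarrow> q \<in> generate (sym_group n) S \<Longrightarrow>
    p \<circ> q \<in> generate (sym_group n) S"
  using generate.eng[of p "sym_group n" S q] by (simp add: sym_group_mult)

lemma generate_sym_group_id: "id \<in> generate (sym_group n) S"
  using generate.one[of "sym_group n" S] by (simp add: sym_group_one)

lemma permutes_eqI:
  assumes "p permutes S" "q permutes S" "\<And>x. x \<in> S \<Longrightarrow> p x = q x"
  shows "p = q"
proof
  fix x show "p x = q x"
    using assms permutes_not_in[of p S x] permutes_not_in[of q S x] by (cases "x \<in> S") simp_all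
qed

text \<open>An injective walk with unit steps never turns back, since turning back would revisit the
  vertex two steps earlier.\<close>

lemma inj_on_unit_steps_linear:
  fixes f :: "nat \<Rightarrow> int"
  assumes inj: "inj_on f {a..n}"
    and steps: "\<And>i. a \<le> i \<Longrightarrow> i < n \<Longrightarrow> \<bar>f (Suc i) - f i\<bar> = 1"
    and "a + k \<le> n"
  shows "f (a + k) = f a + int k * (f (Suc a) - f a)"
  using \<open>a + k \<le> n\<close>
proof (induction k rule: less_induct)
  case (less k)
  define d where "d = f (Suc a) - f a"
  consider "k = 0" | "k = 1" | j where "k = Suc (Suc j)" by (metis One_nat_def not0_implies_Suc)
  then show ?case
  proof cases
    case 3
    have prev: "f (a + j) = f a + int j * d" and last: "f (a + Suc j) = f a + int (Suc j) * d"
      using less.IH[of j] less.IH[of "Suc j"] less.prems 3 unfolding d_def by simp_all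
    have "\<bar>d\<bar> = 1" "\<bar>f (a + k) - f (a + Suc j)\<bar> = 1"
      using steps[of a] steps[of "a + Suc j"] less.prems 3 unfolding d_def by simp_all
    moreover have "f (a + k) \<noteq> f (a + j)"
      using inj less.prems 3 by (auto dest: inj_onD)
    ultimately have "f (a + k) - f (a + Suc j) = d"
      using prev last by (auto simp: abs_if split: if_splits)
    then show ?thesis using last 3 unfolding d_def by (simp add: algebra_simps)
  qed simp_all
qed

lemma cyc_maxfaces_1I: "2 \<le> i \<Longrightarrow> i \<le> m - 1 \<Longrightarrow> {1, i, i + 1} \<in> cyc_maxfaces m"
  unfolding cyc_maxfaces_def by blast

lemma cyc_maxfaces_mI: "1 \<le> i \<Longrightarrow> i \<le> m - 2 \<Longrightarrow> {i, i + 1, m} \<in> cyc_maxfaces m"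
  unfolding cyc_maxfaces_def by blast

lemma cyc_maxfacesE:
  assumes "M \<in> cyc_maxfaces m"
  obtains i where "M = {1, i, i + 1}" "2 \<le> i" "i \<le> m - 1"
        | i where "M = {i, i + 1, m}" "1 \<le> i" "i \<le> m - 2"
  using assms unfolding cyc_maxfaces_def by blast

lemma cyc_maxfaces_subset: "M \<in> cyc_maxfaces m \<Longrightarrow> M \<subseteq> {1..m}"
  by (erule cyc_maxfacesE) auto

lemma finite_cyc_maxfaces: "finite (cyc_maxfaces m)"
  by (rule finite_subset[of _ "Pow {1..m}"]) (use cyc_maxfaces_subset in blast, simp)

lemma K_cycI: "F \<subseteq> M \<Longrightarrow> M \<in> cyc_maxfaces m \<Longrightarrow> F \<in> K_cyc m"
  unfolding K_cyc_def by blast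

lemma edge_K_cyc_iff:
  assumes "m \<ge> 4" "a \<noteq> b"
  shows "{a, b} \<in> K_cyc m \<longleftrightarrow> a \<in> {1..m} \<and> b \<in> {1..m} \<and>
           (a = 1 \<or> b = 1 \<or> a = m \<or> b = m \<or> b = a + 1 \<or> a = b + 1)"
proof
  assume "{a, b} \<in> K_cyc m"
  then obtain M where "M \<in> cyc_maxfaces m" "{a, b} \<subseteq> M" unfolding K_cyc_def by blast
  then show "a \<in> {1..m} \<and> b \<in> {1..m} \<and> (a = 1 \<or> b = 1 \<or> a = m \<or> b = m \<or> b = a + 1 \<or> a = b + 1)"
    using assms by (elim cyc_maxfacesE) auto
next
  have edge_1: "{1, x} \<in> K_cyc m" if "x \<in> {2..m}" for x
  proof (cases "x = m")
    case True
    then show ?thesis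
      using cyc_maxfaces_mI[of 1 m] assms by (intro K_cycI[of _ "{1, 1 + 1, m}"]) auto
  next
    case False
    then show ?thesis
      using cyc_maxfaces_1I[of x m] that by (intro K_cycI[of _ "{1, x, x + 1}"]) auto
  qed
  have edge_m: "{x, m} \<in> K_cyc m" if "x \<in> {1..m - 1}" for x
  proof (cases "x = 1")
    case True
    then show ?thesis using edge_1[of m] assms by simp
  next
    case False
    then show ?thesis
      using cyc_maxfaces_mI[of "x - 1" m] that by (intro K_cycI[of _ "{x - 1, x - 1 + 1, m}"]) auto
  qed
  have edge_succ: "{x, x + 1} \<in> K_cyc m" if x: "1 \<le> x" "x + 1 \<le> m" for x
  proof -
    consider "x = 1" | "x + 1 = m" | "2 \<le> x" "x + 2 \<le> m" using x by linarith
    then show ?thesis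
    proof cases
      case 1
      then show ?thesis using edge_1[of 2] assms by (simp add: numeral_2_eq_2)
    next
      case 2
      then show ?thesis using edge_m[of x] x by simp
    next
      case 3
      then show ?thesis using cyc_maxfaces_1I[of x m] by (intro K_cycI[of _ "{1, x, x + 1}"]) auto
    qed
  qed
  assume "a \<in> {1..m} \<and> b \<in> {1..m} \<and> (a = 1 \<or> b = 1 \<or> a = m \<or> b = m \<or> b = a + 1 \<or> a = b + 1)"
  then show "{a, b} \<in> K_cyc m"
    using assms edge_1[of a] edge_1[of b] edge_m[of a] edge_m[of b] edge_succ[of a] edge_succ[of b]
    by (auto simp: insert_commute)
qed

lemma Aut_K_permutes: "p \<in> Aut_K m \<Longrightarrow> p permutes {1..m}"
  unfolding Aut_K_def by blast

lemma Aut_K_image_iff: "p \<in> Aut_K m \<Longrightarrow> F \<in> K_cyc m \<longleftrightarrow> p ` F \<in> K_cyc m"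
  unfolding Aut_K_def by blast

lemma Aut_K_edge_iff: "p \<in> Aut_K m \<Longrightarrow> {a, b} \<in> K_cyc m \<longleftrightarrow> {p a, p b} \<in> K_cyc m"
  using Aut_K_image_iff[of p m "{a, b}"] by simp

text \<open>Since there are finitely many maximal faces and p is injective, mapping maximal faces into
  maximal faces already means permuting them.\<close>

lemma Aut_KI:
  assumes perm: "p permutes {1..m}"
    and maxfaces: "\<And>M. M \<in> cyc_maxfaces m \<Longrightarrow> p ` M \<in> cyc_maxfaces m"
  shows "p \<in> Aut_K m"
proof -
  have "inj p" using perm by (rule permutes_inj)
  then have "inj_on ((`) p) (cyc_maxfaces m)"
    by (auto simp: inj_on_def inj_image_eq_iff)
  moreover have "(`) p ` cyc_maxfaces m \<subseteq> cyc_maxfaces m" using maxfaces by blast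
  ultimately have onto: "(`) p ` cyc_maxfaces m = cyc_maxfaces m"
    by (metis card_image card_subset_eq finite_cyc_maxfaces)
  have "F \<in> K_cyc m \<longleftrightarrow> p ` F \<in> K_cyc m" for F
  proof
    assume "F \<in> K_cyc m"
    then obtain M where "M \<in> cyc_maxfaces m" "F \<subseteq> M" unfolding K_cyc_def by blast
    then show "p ` F \<in> K_cyc m" using maxfaces by (intro K_cycI[of _ "p ` M"]) auto
  next
    assume "p ` F \<in> K_cyc m"
    then obtain M where "M \<in> (`) p ` cyc_maxfaces m" "p ` F \<subseteq> M"
      unfolding K_cyc_def onto by blast
    then obtain M' where "M' \<in> cyc_maxfaces m" "p ` F \<subseteq> p ` M'" by blast
    with \<open>inj p\<close> show "F \<in> K_cyc m" by (simp add: inj_image_subset_iff K_cycI)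
  qed
  with perm show ?thesis unfolding Aut_K_def by blast
qed

lemma subgroup_Aut_K: "subgroup (Aut_K m) (sym_group m)"
proof (rule group.subgroupI[OF sym_group_is_group])
  show "Aut_K m \<subseteq> carrier (sym_group m)"
    using Aut_K_permutes sym_group_carrier by blast
  show "Aut_K m \<noteq> {}"
  proof -
    have "id \<in> Aut_K m" unfolding Aut_K_def by (simp add: permutes_id)
    then show ?thesis by blast
  qed
next
  fix p assume p: "p \<in> Aut_K m"
  then have perm: "p permutes {1..m}" by (rule Aut_K_permutes)
  have "F \<in> K_cyc m \<longleftrightarrow> inv' p ` F \<in> K_cyc m" for F
    using Aut_K_image_iff[OF p, of "inv' p ` F"]
    by (simp add: image_comp permutes_inverses(1)[OF perm])
  then have "inv' p \<in> Aut_K m"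
    using permutes_inv[OF perm] unfolding Aut_K_def by blast
  then show "inv\<^bsub>sym_group m\<^esub> p \<in> Aut_K m"
    using perm by (simp add: sym_group_carrier)
next
  fix p q assume p: "p \<in> Aut_K m" and q: "q \<in> Aut_K m"
  have "F \<in> K_cyc m \<longleftrightarrow> (p \<circ> q) ` F \<in> K_cyc m" for F
    using Aut_K_image_iff[OF q, of F] Aut_K_image_iff[OF p, of "q ` F"] by (simp add: image_comp)
  then show "p \<otimes>\<^bsub>sym_group m\<^esub> q \<in> Aut_K m"
    using permutes_compose[OF Aut_K_permutes[OF q] Aut_K_permutes[OF p]]
    unfolding Aut_K_def sym_group_mult by blast
qed

lemma generate_subset_Aut_K: "S \<subseteq> Aut_K m \<Longrightarrow> generate (sym_group m) S \<subseteq> Aut_K m"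
  by (rule group.generate_subgroup_incl[OF sym_group_is_group _ subgroup_Aut_K])

lemma sigma_rev_permutes: "sigma_rev m permutes {1..m}"
  by (rule inj_imp_permutes) (auto simp: sigma_rev_def inj_on_def)

lemma sigma_rev_Aut_K: "m \<ge> 4 \<Longrightarrow> sigma_rev m \<in> Aut_K m"
proof (rule Aut_KI[OF sigma_rev_permutes])
  fix M assume m: "m \<ge> 4" and "M \<in> cyc_maxfaces m"
  from \<open>M \<in> cyc_maxfaces m\<close> show "sigma_rev m ` M \<in> cyc_maxfaces m"
  proof (cases rule: cyc_maxfacesE)
    case (1 i)
    then have "sigma_rev m ` M = {m - i, m - i + 1, m}" using m by (auto simp: sigma_rev_def)
    then show ?thesis using 1 m cyc_maxfaces_mI[of "m - i" m] by simp
  next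
    case (2 i)
    then have "sigma_rev m ` M = {1, m - i, m - i + 1}" using m by (auto simp: sigma_rev_def)
    then show ?thesis using 2 m cyc_maxfaces_1I[of "m - i" m] by simp
  qed
qed

lemma tau_1m_Aut_K: "m \<ge> 4 \<Longrightarrow> tau_1m m \<in> Aut_K m"
proof (rule Aut_KI)
  assume m: "m \<ge> 4"
  then show "tau_1m m permutes {1..m}" unfolding tau_1m_def by (intro permutes_swap_id) auto
  fix M assume M: "M \<in> cyc_maxfaces m"
  then show "tau_1m m ` M \<in> cyc_maxfaces m"
  proof (cases rule: cyc_maxfacesE)
    case (1 i)
    show ?thesis
    proof (cases "i = m - 1")
      case True
      then have "tau_1m m ` M = M" using 1 m by (auto simp: tau_1m_def transpose_def)
      then show ?thesis using M by simp
    next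
      case False
      then have "tau_1m m ` M = {i, i + 1, m}" using 1 m by (auto simp: tau_1m_def transpose_def)
      then show ?thesis using 1 False cyc_maxfaces_mI[of i m] by simp
    qed
  next
    case (2 i)
    show ?thesis
    proof (cases "i = 1")
      case True
      then have "tau_1m m ` M = M" using 2 m by (auto simp: tau_1m_def transpose_def)
      then show ?thesis using M by simp
    next
      case False
      then have "tau_1m m ` M = {1, i, i + 1}" using 2 m by (auto simp: tau_1m_def transpose_def)
      then show ?thesis using 2 False cyc_maxfaces_1I[of i m] by simp
    qed
  qed
qed

lemma cyc_maxfaces_5: "cyc_maxfaces 5 = {{1,2,5}, {2,3,5}, {3,4,5}, {1,2,3}, {1,3,4}, {1,4,5}}"
proof -
  have "{i::nat. 2 \<le> i \<and> i \<le> 5 - 1} = {2, 3, 4}" "{i::nat. 1 \<le> i \<and> i \<le> 5 - 2} = {1, 2, 3}"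
    by auto
  moreover have "{f i |i. P i} = f ` {i. P i}" for f :: "nat \<Rightarrow> nat set" and P by blast
  ultimately show ?thesis
    unfolding cyc_maxfaces_def by (simp add: numeral_2_eq_2[symmetric])
qed

lemma rho5_permutes: "rho5 permutes {1..5}"
proof (rule inj_imp_permutes)
  have "{1..5} = {1, 2, 3, 4, 5::nat}" by auto
  then show "inj_on rho5 {1..5}" by (simp add: inj_on_def rho5_def)
qed (auto simp: rho5_def)

lemma rho5_Aut_K: "rho5 \<in> Aut_K 5"
proof (rule Aut_KI[OF rho5_permutes])
  have "rho5 ` {1,2,3} = {3,4,5}" "rho5 ` {1,3,4} = {2,3,5}" "rho5 ` {1,4,5} = {1,2,3}"
    "rho5 ` {1,2,5} = {1,3,4}" "rho5 ` {2,3,5} = {1,4,5}" "rho5 ` {3,4,5} = {1,2,5}"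
    by (auto simp: rho5_def)
  then show "rho5 ` M \<in> cyc_maxfaces 5" if "M \<in> cyc_maxfaces 5" for M
    using that unfolding cyc_maxfaces_5 by (elim insertE emptyE) simp_all
qed

definition universal_vertex :: "nat \<Rightarrow> nat \<Rightarrow> bool" where
  "universal_vertex m v \<longleftrightarrow> (\<forall>w \<in> {1..m}. w \<noteq> v \<longrightarrow> {v, w} \<in> K_cyc m)"

lemma universal_vertex_iff:
  assumes m: "m > 5" and v: "v \<in> {1..m}"
  shows "universal_vertex m v \<longleftrightarrow> v = 1 \<or> v = m"
proof
  assume universal: "universal_vertex m v"
  show "v = 1 \<or> v = m"
  proof (rule ccontr)
    assume inner: "\<not> (v = 1 \<or> v = m)"
    define w where "w = (if v \<ge> 4 then 2 else 5 :: nat)"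
    have "{v, w} \<in> K_cyc m" using universal m v unfolding universal_vertex_def w_def by auto
    then show False using edge_K_cyc_iff[of m v w] inner m unfolding w_def by (auto split: if_splits)
  qed
next
  assume "v = 1 \<or> v = m"
  then show "universal_vertex m v"
    using m v unfolding universal_vertex_def by (auto simp: edge_K_cyc_iff)
qed

lemma Aut_K_universal_vertex:
  assumes p: "p \<in> Aut_K m" and "universal_vertex m v"
  shows "universal_vertex m (p v)"
  unfolding universal_vertex_def
proof (intro ballI impI)
  have perm: "p permutes {1..m}" using p by (rule Aut_K_permutes)
  fix w assume w: "w \<in> {1..m}" "w \<noteq> p v"
  have "inv' p w \<in> {1..m}" using w(1) permutes_in_image[OF permutes_inv[OF perm]] by blast
  moreover have "inv' p w \<noteq> v" using w(2) permutes_inverses(1)[OF perm] by metis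
  ultimately have "{v, inv' p w} \<in> K_cyc m"
    using \<open>universal_vertex m v\<close> unfolding universal_vertex_def by blast
  then show "{p v, w} \<in> K_cyc m"
    using Aut_K_edge_iff[OF p] permutes_inverses(1)[OF perm] by metis
qed

lemma Aut_K_ends:
  assumes m: "m > 5" and p: "p \<in> Aut_K m"
  shows "p 1 = 1 \<and> p m = m \<or> p 1 = m \<and> p m = 1"
proof -
  have perm: "p permutes {1..m}" using p by (rule Aut_K_permutes)
  have ends: "p v = 1 \<or> p v = m" if "v = 1 \<or> v = m" for v
  proof -
    have v: "v \<in> {1..m}" using that m by auto
    then have "universal_vertex m (p v)"
      using Aut_K_universal_vertex[OF p] universal_vertex_iff[OF m] that by blast
    then show ?thesis using universal_vertex_iff[OF m] permutes_in_image[OF perm] v by blast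
  qed
  moreover have "p 1 \<noteq> p m" using m permutes_inj[OF perm] by (simp add: inj_eq)
  ultimately show ?thesis by metis
qed

lemma Aut_K_on_inner:
  assumes m: "m > 5" and p: "p \<in> Aut_K m"
  shows "(\<forall>i \<in> {2..m - 1}. p i = i) \<or> (\<forall>i \<in> {2..m - 1}. p i = m + 1 - i)"
proof -
  have perm: "p permutes {1..m}" using p by (rule Aut_K_permutes)
  have inj: "inj p" using perm by (rule permutes_inj)
  have inner: "p i \<in> {2..m - 1}" if "i \<in> {2..m - 1}" for i
  proof -
    have "i \<in> {1..m}" "i \<noteq> 1" "i \<noteq> m" using that by auto
    then have "p i \<in> {1..m}" "p i \<noteq> p 1" "p i \<noteq> p m"
      using permutes_in_image[OF perm] inj by (simp_all add: inj_eq)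
    then show ?thesis using Aut_K_ends[OF m p] by auto
  qed
  define f where "f i = int (p i)" for i
  have steps: "\<bar>f (Suc i) - f i\<bar> = 1" if "2 \<le> i" "i < m - 1" for i
  proof -
    have "{i, Suc i} \<in> K_cyc m" using edge_K_cyc_iff[of m i "Suc i"] m that by auto
    then have "{p i, p (Suc i)} \<in> K_cyc m" using Aut_K_edge_iff[OF p] by blast
    moreover have "p i \<noteq> p (Suc i)" using inj by (simp add: inj_eq)
    moreover have "p i \<in> {2..m - 1}" "p (Suc i) \<in> {2..m - 1}" using inner that by auto
    ultimately show ?thesis using edge_K_cyc_iff[of m "p i" "p (Suc i)"] m unfolding f_def by auto
  qed
  have "inj_on f {2..m - 1}" using inj unfolding f_def inj_on_def by simp
  then have linear: "f i = f 2 + (int i - 2) * (f 3 - f 2)" if "i \<in> {2..m - 1}" for i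
  proof -
    have i: "2 + (i - 2) = i" using that by auto
    show ?thesis
      using inj_on_unit_steps_linear[of f 2 "m - 1" "i - 2", unfolded i] \<open>inj_on f _\<close> steps that
      by (simp add: of_nat_diff)
  qed
  have bounds: "2 \<le> f i" "f i \<le> int m - 1" if "i \<in> {2..m - 1}" for i
    using inner[OF that] m unfolding f_def by auto
  have ends_inner: "2 \<in> {2..m - 1}" "m - 1 \<in> {2..m - 1}" using m by auto
  consider "f 3 - f 2 = 1" | "f 3 - f 2 = -1"
    using steps[of 2] m by (fastforce simp: numeral_3_eq_3)
  then show ?thesis
  proof cases
    case 1
    then have "f 2 = 2"
      using linear[OF ends_inner(2)] bounds[OF ends_inner(1)] bounds[OF ends_inner(2)] m by simp
    then have "p i = i" if "i \<in> {2..m - 1}" for i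
      using linear[OF that] 1 unfolding f_def by simp
    then show ?thesis by blast
  next
    case 2
    then have "f 2 = int m - 1"
      using linear[OF ends_inner(2)] bounds[OF ends_inner(1)] bounds[OF ends_inner(2)] m by simp
    then have "p i = m + 1 - i" if "i \<in> {2..m - 1}" for i
    proof -
      have "int (p i) = int m + 1 - int i"
        using linear[OF that, unfolded 2] \<open>f 2 = int m - 1\<close> unfolding f_def by simp
      then show ?thesis using that by auto
    qed
    then show ?thesis by blast
  qed
qed

lemma Aut_K_cases:
  assumes m: "m > 5" and p: "p \<in> Aut_K m"
  shows "p \<in> {id, tau_1m m, sigma_rev m, tau_1m m \<circ> sigma_rev m}"
proof -
  have perm: "p permutes {1..m}" using p by (rule Aut_K_permutes)
  have tau: "tau_1m m 1 = m" "tau_1m m m = 1" "\<forall>i \<in> {2..m - 1}. tau_1m m i = i"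
    by (auto simp: tau_1m_def)
  have sigma: "sigma_rev m 1 = m" "sigma_rev m m = 1"
    "\<forall>i \<in> {2..m - 1}. sigma_rev m i = m + 1 - i"
    using m by (auto simp: sigma_rev_def)
  have tau_perm: "tau_1m m permutes {1..m}" using m by (intro Aut_K_permutes tau_1m_Aut_K) simp
  note perms = permutes_id tau_perm sigma_rev_permutes
    permutes_compose[OF sigma_rev_permutes tau_perm]
  have inner_or_end: "i = 1 \<or> i = m \<or> i \<in> {2..m - 1}" if "i \<in> {1..m}" for i
    using that by auto
  from Aut_K_ends[OF m p] Aut_K_on_inner[OF m p] show ?thesis
  proof (elim disjE conjE)
    assume "p 1 = 1" "p m = m" "\<forall>i\<in>{2..m - 1}. p i = i"
    then have "p = id" using inner_or_end
      by (intro permutes_eqI[OF perm perms(1)]) (metis (no_types, lifting) id_apply)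
    then show ?thesis by simp
  next
    assume "p 1 = m" "p m = 1" "\<forall>i\<in>{2..m - 1}. p i = i"
    then have "p = tau_1m m" using inner_or_end tau
      by (intro permutes_eqI[OF perm perms(2)]) (metis (no_types, lifting))
    then show ?thesis by simp
  next
    assume "p 1 = m" "p m = 1" "\<forall>i\<in>{2..m - 1}. p i = m + 1 - i"
    then have "p = sigma_rev m" using inner_or_end sigma
      by (intro permutes_eqI[OF perm perms(3)]) (metis (no_types, lifting))
    then show ?thesis by simp
  next
    assume "p 1 = 1" "p m = m" "\<forall>i\<in>{2..m - 1}. p i = m + 1 - i"
    moreover have "m + 1 - i \<in> {2..m - 1}" if "i \<in> {2..m - 1}" for i using that by auto
    ultimately have "p = tau_1m m \<circ> sigma_rev m" using inner_or_end tau sigma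
      by (intro permutes_eqI[OF perm perms(4)]) (metis (no_types, lifting) comp_apply)
    then show ?thesis by simp
  qed
qed

definition rho5_tau_words :: "(nat \<Rightarrow> nat) set" where
  "rho5_tau_words = (let r = rho5; t = tau_1m 5 in
     {id, r, t, r \<circ> r, t \<circ> r, r \<circ> t, r \<circ> r \<circ> r, t \<circ> r \<circ> r, r \<circ> r \<circ> t, t \<circ> r \<circ> t,
      r \<circ> r \<circ> r \<circ> r, t \<circ> r \<circ> r \<circ> r})"

lemma rho5_tau_words_subset_generate: "rho5_tau_words \<subseteq> generate (sym_group 5) {rho5, tau_1m 5}"
proof -
  have "rho5 \<in> generate (sym_group 5) {rho5, tau_1m 5}"
    and "tau_1m 5 \<in> generate (sym_group 5) {rho5, tau_1m 5}"
    by (auto intro: generate.incl)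
  then show ?thesis
    unfolding rho5_tau_words_def Let_def
    by (auto intro!: generate_sym_group_comp generate_sym_group_id)
qed

lemma Aut_K_5_swaps_2_4:
  assumes p: "p \<in> Aut_K 5"
  shows "p 2 = 2 \<and> p 4 = 4 \<or> p 2 = 4 \<and> p 4 = 2"
proof -
  have perm: "p permutes {1..5}" using p by (rule Aut_K_permutes)
  have "{2, 4} \<notin> K_cyc 5" using edge_K_cyc_iff[of 5 2 4] by simp
  then have "{p 2, p 4} \<notin> K_cyc 5" using Aut_K_edge_iff[OF p] by blast
  moreover have "p 2 \<noteq> p 4" using permutes_inj[OF perm] by (simp add: inj_eq)
  moreover have "p 2 \<in> {1..5}" "p 4 \<in> {1..5}" using permutes_in_image[OF perm] by simp_all
  ultimately show ?thesis using edge_K_cyc_iff[of 5 "p 2" "p 4"] by auto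
qed

lemma Aut_K_5_subset_rho5_tau_words: "Aut_K 5 \<subseteq> rho5_tau_words"
proof
  fix p assume p: "p \<in> Aut_K 5"
  have perm: "p permutes {1..5}" using p by (rule Aut_K_permutes)
  have odd_range: "p i \<in> {1, 3, 5}" if "i \<in> {1, 3, 5}" for i
  proof -
    have "i \<in> {1..5}" using that by auto
    then have "p i \<in> {1..5}" using permutes_in_image[OF perm] by simp
    moreover have "p i \<noteq> p 2" "p i \<noteq> p 4" using that permutes_inj[OF perm] by (auto simp: inj_eq)
    ultimately show ?thesis using Aut_K_5_swaps_2_4[OF p] by auto
  qed
  have distinct: "p 1 \<noteq> p 3" "p 1 \<noteq> p 5" "p 3 \<noteq> p 5"
    using permutes_inj[OF perm] by (simp_all add: inj_eq)
  have "\<exists>q \<in> rho5_tau_words. p 1 = q 1 \<and> p 2 = q 2 \<and> p 3 = q 3 \<and> p 4 = q 4 \<and> p 5 = q 5"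
    using odd_range[of 1] odd_range[of 3] odd_range[of 5] Aut_K_5_swaps_2_4[OF p] distinct
    unfolding rho5_tau_words_def Let_def
    by (simp add: rho5_def tau_1m_def transpose_def) (elim disjE; simp)
  then obtain q where q: "q \<in> rho5_tau_words"
    and q_values: "p 1 = q 1" "p 2 = q 2" "p 3 = q 3" "p 4 = q 4" "p 5 = q 5"
    by blast
  have "{1..5} = {1, 2, 3, 4, 5 :: nat}" by auto
  then have agree: "p i = q i" if "i \<in> {1..5}" for i using that q_values by auto
  have "{rho5, tau_1m 5} \<subseteq> Aut_K 5" using rho5_Aut_K tau_1m_Aut_K[of 5] by simp
  then have "q \<in> Aut_K 5"
    using q rho5_tau_words_subset_generate generate_subset_Aut_K by blast
  then have "q permutes {1..5}" by (rule Aut_K_permutes)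
  then show "p \<in> rho5_tau_words" using permutes_eqI[OF perm _ agree] q by simp
qed

theorem lemma5p3:
  fixes m :: nat
  shows "(m > 5 \<longrightarrow> Aut_K m = generate (sym_group m) {sigma_rev m, tau_1m m})
       \<and> (m = 5 \<longrightarrow> Aut_K m = generate (sym_group m) {rho5, tau_1m m})"
proof (intro conjI impI)
  assume m: "m > 5"
  let ?G = "generate (sym_group m) {sigma_rev m, tau_1m m}"
  have "{sigma_rev m, tau_1m m} \<subseteq> Aut_K m" using m sigma_rev_Aut_K tau_1m_Aut_K by simp
  then have "?G \<subseteq> Aut_K m" by (rule generate_subset_Aut_K)
  moreover have "{id, tau_1m m, sigma_rev m, tau_1m m \<circ> sigma_rev m} \<subseteq> ?G"
    by (auto intro: generate.incl generate_sym_group_id generate_sym_group_comp)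
  ultimately show "Aut_K m = ?G" using Aut_K_cases[OF m] by blast
next
  assume "m = 5"
  have "{rho5, tau_1m 5} \<subseteq> Aut_K 5" using rho5_Aut_K tau_1m_Aut_K[of 5] by simp
  then show "Aut_K m = generate (sym_group m) {rho5, tau_1m m}"
    unfolding \<open>m = 5\<close>
    using Aut_K_5_subset_rho5_tau_words rho5_tau_words_subset_generate generate_subset_Aut_K
    by blast
qed

end
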